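(* Under the standing assumptions below, exactly one of the following holds: either there exist a map $u_1:M\to M'$ and a fixed $b'_1\in N'$ such that $\phi\left(\left[\begin{smallmatrix} 1 & m\\ 0 & 0\end{smallmatrix}\right]\right)=\left[\begin{smallmatrix} 1 & u_1(m)\\ b'_1 & 0\end{smallmatrix}\right]$ for all $m\in M$; or there exist a map $v_2:M\to N'$ and a fixed $a'_2\in M'$ such that $\phi\left(\left[\begin{smallmatrix} 1 & m\\ 0 & 0\end{smallmatrix}\right]\right)=\left[\begin{smallmatrix} 0 & a'_2\\ v_2(m) & 1\end{smallmatrix}\right]$ for all $m\in M$.
   Context: All rings have an identity $1\neq 0$. Standing assumptions: $R,S,R',S'$ are rings whose only idempotents are $0$ and $1$; $M$ is an $R$-$S$-bimodule, $N$ an $S$-$R$-bimodule, $M'$ an $R'$-$S'$-bimodule, $N'$ an $S'$-$R'$-bimodule; $T=\left[\begin{smallmatrix} R & M\\ N & S\end{smallmatrix}\right]$ and $T'=\left[\begin{smallmatrix} R' & M'\\ N' & S'\end{smallmatrix}\right]$ are the Morita context rings with both Morita maps zero, i.e. the sets of formal matrices with entrywise addition and product $\left[\begin{smallmatrix} r & m\\ n & s\end{smallmatrix}\right]\left[\begin{smallmatrix} r' & m'\\ n' & s'\end{smallmatrix}\right]=\left[\begin{smallmatrix} rr' & rm'+ms'\\ nr'+sn' & ss'\end{smallmatrix}\right]$; and $\phi:T\to T'$ is a ring isomorphism. *)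

theory Defs
  imports Main
begin

text \<open>Rings: types of class ring_1 (so 1 is not 0). Bimodules: abelian groups
  (types of class ab_group_add) with a left and a right scalar action.\<close>

definition trivial_idempotents :: "'a::ring_1 itself \<Rightarrow> bool" where
  "trivial_idempotents _ \<longleftrightarrow> (\<forall>e::'a. e * e = e \<longrightarrow> e = 0 \<or> e = 1)"

definition bimodule ::
  "('r::ring_1 \<Rightarrow> 'm::ab_group_add \<Rightarrow> 'm) \<Rightarrow> ('m \<Rightarrow> 's::ring_1 \<Rightarrow> 'm) \<Rightarrow> bool" where
  "bimodule lact ract \<longleftrightarrow>
     (\<forall>r m m'. lact r (m + m') = lact r m + lact r m') \<and>
     (\<forall>r r' m. lact (r + r') m = lact r m + lact r' m) \<and>
     (\<forall>r r' m. lact (r * r') m = lact r (lact r' m)) \<and>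
     (\<forall>m. lact 1 m = m) \<and>
     (\<forall>m m' s. ract (m + m') s = ract m s + ract m' s) \<and>
     (\<forall>m s s'. ract m (s + s') = ract m s + ract m s') \<and>
     (\<forall>m s s'. ract m (s * s') = ract (ract m s) s') \<and>
     (\<forall>m. ract m 1 = m) \<and>
     (\<forall>r m s. lact r (ract m s) = ract (lact r m) s)"

text \<open>Elements of the Morita context ring with zero Morita maps:
  MC r m n s stands for the formal matrix [r m; n s].\<close>
datatype ('r, 'm, 'n, 's) mctx = MC 'r 'm 'n 's

fun mc_add :: "('r::ab_group_add, 'm::ab_group_add, 'n::ab_group_add, 's::ab_group_add) mctx
    \<Rightarrow> ('r, 'm, 'n, 's) mctx \<Rightarrow> ('r, 'm, 'n, 's) mctx" where
  "mc_add (MC r m n s) (MC r' m' n' s') = MC (r + r') (m + m') (n + n') (s + s')"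

fun mc_mult ::
  "('r::ring_1 \<Rightarrow> 'm::ab_group_add \<Rightarrow> 'm) \<Rightarrow> ('m \<Rightarrow> 's::ring_1 \<Rightarrow> 'm) \<Rightarrow>
   ('s \<Rightarrow> 'n::ab_group_add \<Rightarrow> 'n) \<Rightarrow> ('n \<Rightarrow> 'r \<Rightarrow> 'n) \<Rightarrow>
   ('r, 'm, 'n, 's) mctx \<Rightarrow> ('r, 'm, 'n, 's) mctx \<Rightarrow> ('r, 'm, 'n, 's) mctx" where
  "mc_mult lM rM lN rN (MC r m n s) (MC r' m' n' s') =
     MC (r * r') (lM r m' + rM m s') (rN n r' + lN s n') (s * s')"

definition mc_one :: "('r::ring_1, 'm::ab_group_add, 'n::ab_group_add, 's::ring_1) mctx" where
  "mc_one = MC 1 0 0 1"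

definition mc_ring_iso ::
  "('r::ring_1 \<Rightarrow> 'm::ab_group_add \<Rightarrow> 'm) \<Rightarrow> ('m \<Rightarrow> 's::ring_1 \<Rightarrow> 'm) \<Rightarrow>
   ('s \<Rightarrow> 'n::ab_group_add \<Rightarrow> 'n) \<Rightarrow> ('n \<Rightarrow> 'r \<Rightarrow> 'n) \<Rightarrow>
   ('r2::ring_1 \<Rightarrow> 'm2::ab_group_add \<Rightarrow> 'm2) \<Rightarrow> ('m2 \<Rightarrow> 's2::ring_1 \<Rightarrow> 'm2) \<Rightarrow>
   ('s2 \<Rightarrow> 'n2::ab_group_add \<Rightarrow> 'n2) \<Rightarrow> ('n2 \<Rightarrow> 'r2 \<Rightarrow> 'n2) \<Rightarrow>
   (('r, 'm, 'n, 's) mctx \<Rightarrow> ('r2, 'm2, 'n2, 's2) mctx) \<Rightarrow> bool" where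
  "mc_ring_iso lM rM lN rN lM' rM' lN' rN' \<phi> \<longleftrightarrow>
     bij \<phi> \<and>
     (\<forall>x y. \<phi> (mc_add x y) = mc_add (\<phi> x) (\<phi> y)) \<and>
     (\<forall>x y. \<phi> (mc_mult lM rM lN rN x y) = mc_mult lM' rM' lN' rN' (\<phi> x) (\<phi> y)) \<and>
     \<phi> mc_one = mc_one"

end

theory Submission
  imports Defs
begin

(* The matrices  E m = [1 m; 0 0]  are idempotents of T, different from 0 and 1,
   and satisfy  E 0 * E m = E m.  Their images under the isomorphism phi are therefore
   idempotents of T' other than 0 and 1.  Since R' and S' have only trivial idempotents, the
   diagonal of such an idempotent is either (1, 0) or (0, 1).  Which of the two cases occurs is
   decided once and for all by phi (E 0): the relation  phi (E 0) * phi (E m) = phi (E m)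
   forces every phi (E m) to have the same diagonal as phi (E 0), and moreover fixes its
   lower-left entry (first case) resp. its upper-right entry (second case).  The two cases
   exclude each other because 1 <> 0.  (Only the target rings R', S' need trivial idempotents.)
   The file first records the zero laws of bimodules, then classifies nontrivial idempotents
   of a Morita context ring, proves the absorption lemma for left multiplication by an
   idempotent of either diagonal type, transports idempotents along a ring isomorphism, and
   finally derives the theorem. *)

lemma bimodule_zero_laws:
  fixes l :: "'r::ring_1 \<Rightarrow> 'm::ab_group_add \<Rightarrow> 'm" and r :: "'m \<Rightarrow> 's::ring_1 \<Rightarrow> 'm"
  assumes "bimodule l r"
  shows "l a 0 = 0" "l 0 x = 0" "r x 0 = 0" "r 0 c = 0" "l 1 x = x" "r x 1 = x"
proof -
  have l_add: "\<And>a m m'. l a (m + m') = l a m + l a m'"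
   and l_addr: "\<And>a a' m. l (a + a') m = l a m + l a' m"
   and r_add: "\<And>m m' c. r (m + m') c = r m c + r m' c"
   and r_adds: "\<And>m c c'. r m (c + c') = r m c + r m c'"
    using assms unfolding bimodule_def by auto
  show "l a 0 = 0" using l_add[of a 0 0] by simp
  show "l 0 x = 0" using l_addr[of 0 0 x] by simp
  show "r x 0 = 0" using r_adds[of x 0 0] by simp
  show "r 0 c = 0" using r_add[of 0 0 c] by simp
  show "l 1 x = x" "r x 1 = x" using assms unfolding bimodule_def by blast+
qed

lemma mc_idempotent_diagonal:
  fixes lM :: "'r::ring_1 \<Rightarrow> 'm::ab_group_add \<Rightarrow> 'm" and rM :: "'m \<Rightarrow> 's::ring_1 \<Rightarrow> 'm"
    and lN :: "'s \<Rightarrow> 'n::ab_group_add \<Rightarrow> 'n" and rN :: "'n \<Rightarrow> 'r \<Rightarrow> 'n"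
  assumes "trivial_idempotents TYPE('r)" and "trivial_idempotents TYPE('s)"
    and bM: "bimodule lM rM" and bN: "bimodule lN rN"
    and idem: "mc_mult lM rM lN rN (MC r a b s) (MC r a b s) = MC r a b s"
    and nonzero: "MC r a b s \<noteq> MC 0 0 0 0" and nonone: "MC r a b s \<noteq> MC 1 0 0 1"
  shows "(r = 1 \<and> s = 0) \<or> (r = 0 \<and> s = 1)"
proof -
  from idem have e: "r * r = r" "s * s = s" "lM r a + rM a s = a" "rN b r + lN s b = b"
    by auto
  have "r = 0 \<or> r = 1" "s = 0 \<or> s = 1"
    using assms(1,2) e(1,2) unfolding trivial_idempotents_def by blast+
  moreover have "\<not> (r = 0 \<and> s = 0)"
    using e(3,4) nonzero bimodule_zero_laws[OF bM] bimodule_zero_laws[OF bN] by auto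
  moreover have "\<not> (r = 1 \<and> s = 1)"
  proof
    assume "r = 1 \<and> s = 1"
    with e(3,4) have "a + a = a" "b + b = b"
      using bimodule_zero_laws[OF bM] bimodule_zero_laws[OF bN] by auto
    then have "a = 0" "b = 0" by simp_all
    with nonone \<open>r = 1 \<and> s = 1\<close> show False by simp
  qed
  ultimately show ?thesis by blast
qed

lemma mc_absorb_upper:
  assumes bM: "bimodule lM rM" and bN: "bimodule lN rN"
    and diag: "(r = 1 \<and> s = 0) \<or> (r = 0 \<and> s = 1)"
    and absorb: "mc_mult lM rM lN rN (MC 1 a b 0) (MC r x y s) = MC r x y s"
  shows "r = 1 \<and> y = b \<and> s = 0"
proof -
  from absorb have "MC r (x + rM a s) (rN b r) 0 = MC r x y s"
    using bimodule_zero_laws[OF bM] bimodule_zero_laws[OF bN] by simp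
  then have "s = 0" "y = rN b r" by auto
  with diag show ?thesis using bimodule_zero_laws[OF bN] by auto
qed

lemma mc_absorb_lower:
  assumes bM: "bimodule lM rM" and bN: "bimodule lN rN"
    and diag: "(r = 1 \<and> s = 0) \<or> (r = 0 \<and> s = 1)"
    and absorb: "mc_mult lM rM lN rN (MC 0 a b 1) (MC r x y s) = MC r x y s"
  shows "r = 0 \<and> x = a \<and> s = 1"
proof -
  from absorb have "MC 0 (rM a s) (rN b r + y) s = MC r x y s"
    using bimodule_zero_laws[OF bM] bimodule_zero_laws[OF bN] by simp
  then have "r = 0" "x = rM a s" by auto
  with diag show ?thesis using bimodule_zero_laws[OF bM] by auto
qed

lemma mc_additive_zero:
  assumes "\<And>x y. \<phi> (mc_add x y) = mc_add (\<phi> x) (\<phi> y)"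
  shows "\<phi> (MC 0 0 0 0) = MC 0 0 0 0"
proof (cases "\<phi> (MC 0 0 0 0)")
  case (MC a b c d)
  have "\<phi> (MC 0 0 0 0) = mc_add (\<phi> (MC 0 0 0 0)) (\<phi> (MC 0 0 0 0))"
    using assms[of "MC 0 0 0 0" "MC 0 0 0 0"] by simp
  with MC show ?thesis by simp
qed

lemma mc_ring_iso_idempotent_diagonal:
  fixes \<phi> :: "('r::ring_1, 'm::ab_group_add, 'n::ab_group_add, 's::ring_1) mctx
              \<Rightarrow> ('r2::ring_1, 'm2::ab_group_add, 'n2::ab_group_add, 's2::ring_1) mctx"
  assumes "trivial_idempotents TYPE('r2)" and "trivial_idempotents TYPE('s2)"
    and "bimodule lM' rM'" and "bimodule lN' rN'"
    and iso: "mc_ring_iso lM rM lN rN lM' rM' lN' rN' \<phi>"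
    and idem: "mc_mult lM rM lN rN e e = e"
    and nonzero: "e \<noteq> MC 0 0 0 0" and nonone: "e \<noteq> MC 1 0 0 1"
  obtains r a b s where "\<phi> e = MC r a b s" and "(r = 1 \<and> s = 0) \<or> (r = 0 \<and> s = 1)"
proof (cases "\<phi> e")
  case (MC r a b s)
  have inj: "inj \<phi>" using iso bij_is_inj unfolding mc_ring_iso_def by blast
  have mult_hom: "\<phi> (mc_mult lM rM lN rN e e) = mc_mult lM' rM' lN' rN' (\<phi> e) (\<phi> e)"
    using iso unfolding mc_ring_iso_def by blast
  have zero: "\<phi> (MC 0 0 0 0) = MC 0 0 0 0"
    using iso mc_additive_zero unfolding mc_ring_iso_def by blast
  have one: "\<phi> (MC 1 0 0 1) = MC 1 0 0 1"
    using iso unfolding mc_ring_iso_def mc_one_def by blast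
  have "\<phi> e \<noteq> \<phi> (MC 0 0 0 0)" "\<phi> e \<noteq> \<phi> (MC 1 0 0 1)"
    using inj nonzero nonone by (simp_all add: inj_eq)
  then have "MC r a b s \<noteq> MC 0 0 0 0" "MC r a b s \<noteq> MC 1 0 0 1"
    by (simp_all only: MC zero one not_False_eq_True)
  moreover have "mc_mult lM' rM' lN' rN' (MC r a b s) (MC r a b s) = MC r a b s"
    using mult_hom by (simp only: idem MC)
  ultimately have "(r = 1 \<and> s = 0) \<or> (r = 0 \<and> s = 1)"
    by (rule mc_idempotent_diagonal[OF assms(1-4), rotated])
  with MC show ?thesis by (rule that)
qed

lemma mc_ring_iso_image_of_row:
  fixes \<phi> :: "('r::ring_1, 'm::ab_group_add, 'n::ab_group_add, 's::ring_1) mctx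
              \<Rightarrow> ('r2::ring_1, 'm2::ab_group_add, 'n2::ab_group_add, 's2::ring_1) mctx"
  assumes "trivial_idempotents TYPE('r2)" and "trivial_idempotents TYPE('s2)"
    and bM: "bimodule lM rM" and bN: "bimodule lN rN"
    and bM': "bimodule lM' rM'" and bN': "bimodule lN' rN'"
    and iso: "mc_ring_iso lM rM lN rN lM' rM' lN' rN' \<phi>"
  shows "(\<exists>u b. \<forall>m. \<phi> (MC 1 m 0 0) = MC 1 (u m) b 0) \<or>
         (\<exists>v a. \<forall>m. \<phi> (MC 1 m 0 0) = MC 0 a (v m) 1)"
proof -
  define E where "E m = MC (1::'r) m (0::'n) (0::'s)" for m :: 'm
  note zero_laws = bimodule_zero_laws[OF bM] bimodule_zero_laws[OF bN]
  have mult_hom: "\<phi> (mc_mult lM rM lN rN x y) = mc_mult lM' rM' lN' rN' (\<phi> x) (\<phi> y)" for x y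
    using iso unfolding mc_ring_iso_def by blast
  have diagonal: "\<exists>r x y s. \<phi> (E m) = MC r x y s \<and> ((r = 1 \<and> s = 0) \<or> (r = 0 \<and> s = 1))"
    for m
  proof -
    have "mc_mult lM rM lN rN (E m) (E m) = E m" using zero_laws by (simp add: E_def)
    moreover have "E m \<noteq> MC 0 0 0 0" "E m \<noteq> MC 1 0 0 1" by (simp_all add: E_def)
    ultimately obtain r x y s where "\<phi> (E m) = MC r x y s" "(r = 1 \<and> s = 0) \<or> (r = 0 \<and> s = 1)"
      by (rule mc_ring_iso_idempotent_diagonal[OF assms(1,2) bM' bN' iso])
    then show ?thesis by blast
  qed
  have absorb: "mc_mult lM' rM' lN' rN' (\<phi> (E 0)) (\<phi> (E m)) = \<phi> (E m)" for m
  proof -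
    have "mc_mult lM rM lN rN (E 0) (E m) = E m" using zero_laws by (simp add: E_def)
    with mult_hom[of "E 0" "E m"] show ?thesis by metis
  qed
  obtain r a b s where E0: "\<phi> (E 0) = MC r a b s" and "(r = 1 \<and> s = 0) \<or> (r = 0 \<and> s = 1)"
    using diagonal[of 0] by blast
  then consider "r = 1" "s = 0" | "r = 0" "s = 1" by blast
  then show ?thesis
  proof cases
    case 1
    have "\<exists>x. \<phi> (E m) = MC 1 x b 0" for m
    proof -
      obtain r' x y s' where Em: "\<phi> (E m) = MC r' x y s'"
        and diag: "(r' = 1 \<and> s' = 0) \<or> (r' = 0 \<and> s' = 1)"
        using diagonal[of m] by blast
      have absorb_m: "mc_mult lM' rM' lN' rN' (MC 1 a b 0) (MC r' x y s') = MC r' x y s'"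
        using absorb[of m] by (simp only: E0 Em 1)
      have "r' = 1 \<and> y = b \<and> s' = 0" by (rule mc_absorb_upper[OF bM' bN' diag absorb_m])
      with Em show ?thesis by blast
    qed
    then obtain u where "\<And>m. \<phi> (E m) = MC 1 (u m) b 0" by metis
    then show ?thesis unfolding E_def by blast
  next
    case 2
    have "\<exists>y. \<phi> (E m) = MC 0 a y 1" for m
    proof -
      obtain r' x y s' where Em: "\<phi> (E m) = MC r' x y s'"
        and diag: "(r' = 1 \<and> s' = 0) \<or> (r' = 0 \<and> s' = 1)"
        using diagonal[of m] by blast
      have absorb_m: "mc_mult lM' rM' lN' rN' (MC 0 a b 1) (MC r' x y s') = MC r' x y s'"
        using absorb[of m] by (simp only: E0 Em 2)
      have "r' = 0 \<and> x = a \<and> s' = 1" by (rule mc_absorb_lower[OF bM' bN' diag absorb_m])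
      with Em show ?thesis by blast
    qed
    then obtain v where "\<And>m. \<phi> (E m) = MC 0 a (v m) 1" by metis
    then show ?thesis unfolding E_def by blast
  qed
qed

theorem proposition4p3:
  fixes lM :: "'r::ring_1 \<Rightarrow> 'm::ab_group_add \<Rightarrow> 'm" and rM :: "'m \<Rightarrow> 's::ring_1 \<Rightarrow> 'm"
    and lN :: "'s \<Rightarrow> 'n::ab_group_add \<Rightarrow> 'n" and rN :: "'n \<Rightarrow> 'r \<Rightarrow> 'n"
    and lM' :: "'r2::ring_1 \<Rightarrow> 'm2::ab_group_add \<Rightarrow> 'm2" and rM' :: "'m2 \<Rightarrow> 's2::ring_1 \<Rightarrow> 'm2"
    and lN' :: "'s2 \<Rightarrow> 'n2::ab_group_add \<Rightarrow> 'n2" and rN' :: "'n2 \<Rightarrow> 'r2 \<Rightarrow> 'n2"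
    and \<phi> :: "('r, 'm, 'n, 's) mctx \<Rightarrow> ('r2, 'm2, 'n2, 's2) mctx"
  assumes "trivial_idempotents TYPE('r)" and "trivial_idempotents TYPE('s)"
    and "trivial_idempotents TYPE('r2)" and "trivial_idempotents TYPE('s2)"
    and "bimodule lM rM" and "bimodule lN rN"
    and "bimodule lM' rM'" and "bimodule lN' rN'"
    and "mc_ring_iso lM rM lN rN lM' rM' lN' rN' \<phi>"
  shows "(\<exists>u1 b1'. \<forall>m. \<phi> (MC 1 m 0 0) = MC 1 (u1 m) b1' 0) \<noteq>
         (\<exists>v2 a2'. \<forall>m. \<phi> (MC 1 m 0 0) = MC 0 a2' (v2 m) 1)"
proof -
  have exclusive: "\<not> ((\<exists>u1 b1'. \<forall>m. \<phi> (MC 1 m 0 0) = MC 1 (u1 m) b1' 0) \<and>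
                      (\<exists>v2 a2'. \<forall>m. \<phi> (MC 1 m 0 0) = MC 0 a2' (v2 m) 1))"
    by (metis mctx.inject zero_neq_one)
  with mc_ring_iso_image_of_row[OF assms(3-9)] show ?thesis by blast
qed

end
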